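(* Let $2\le n\le\kappa+1$, $\ell=\binom{\kappa}{n-1}$, $\beta=\kappa\ell$, and let $D\in\mathbb R^{\beta\times n\kappa^n}$ be the matrix constructed below with rows $d_1,\dots,d_\beta$. Then for $i,j=1,\dots,\beta$, $$\langle d_i,d_j\rangle=\begin{cases}0,& i\neq j,\\ n!,& i=j.\end{cases}$$
   Context: Semi-tensor product: for $A\in\mathbb R^{m\times n}$, $B\in\mathbb R^{p\times q}$ and $t=\mathrm{lcm}(n,p)$, $A\ltimes B=(A\otimes I_{t/n})(B\otimes I_{t/p})$; associative. Swap matrix $W_{[m,n]}\in\mathbb R^{mn\times mn}$: the permutation matrix with $W_{[m,n]}(X\otimes Y)=Y\otimes X$ for $X\in\mathbb R^m,Y\in\mathbb R^n$ ($W_{[1,n]}=I_n$). $\delta_\kappa^j$ is the $j$-th column of $I_\kappa$. Let $z^1,\dots,z^\ell$ be the strictly increasing tuples $(z_1<\dots<z_{n-1})$ with entries in $\{1,\dots,\kappa\}$, in lexicographic order. For $i=1,\dots,\ell$, $j=1,\dots,\kappa$ define $\eta^i_j\in\mathbb R^{\kappa^n}$ (row) by $(\eta^i_j)^T=\delta_\kappa^j\otimes\sum_{\sigma\in\mathbf S_{n-1}}\mathrm{sgn}(\sigma)\,\delta_\kappa^{z^i_{\sigma(1)}}\otimes\cdots\otimes\delta_\kappa^{z^i_{\sigma(n-1)}}$; $B\in\mathbb R^{\kappa\ell\times\kappa^n}$ has rows $\eta^1_1,\dots,\eta^1_\kappa,\dots,\eta^\ell_1,\dots,\eta^\ell_\kappa$.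 Then $D=\left[B,\,-B\ltimes W_{[\kappa^0,\kappa]}\ltimes W_{[\kappa,\kappa]},\,-B\ltimes W_{[\kappa,\kappa]}\ltimes W_{[\kappa,\kappa^2]},\dots,-B\ltimes W_{[\kappa^{n-2},\kappa]}\ltimes W_{[\kappa,\kappa^{n-1}]}\right]$. $\langle\cdot,\cdot\rangle$ is the standard inner product. *)

theory Defs
  imports "Jordan_Normal_Form.Matrix" "HOL-Combinatorics.Permutations" "HOL-Library.List_Lexorder"
begin

definition kron :: "real mat \<Rightarrow> real mat \<Rightarrow> real mat" where
  "kron A B = mat (dim_row A * dim_row B) (dim_col A * dim_col B)
     (\<lambda>(i, j). A $$ (i div dim_row B, j div dim_col B) * B $$ (i mod dim_row B, j mod dim_col B))"

definition stp :: "real mat \<Rightarrow> real mat \<Rightarrow> real mat" where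
  "stp A B = (let n = dim_col A; p = dim_row B; t = lcm n p in
      kron A (1\<^sub>m (t div n)) * kron B (1\<^sub>m (t div p)))"

text \<open>Swap matrix W_[m,n] (mn x mn permutation matrix with W (X \<otimes> Y) = Y \<otimes> X):
  it maps coordinate a*n+b of X \<otimes> Y to coordinate b*m+a of Y \<otimes> X.\<close>
definition swap_mat :: "nat \<Rightarrow> nat \<Rightarrow> real mat" where
  "swap_mat m n = mat (m * n) (m * n) (\<lambda>(r, c). if r = (c mod n) * m + c div n then 1 else 0)"

text \<open>delta_kappa^j, the j-th column of I_kappa (j is 1-based), as a kappa x 1 matrix.\<close>
definition delta :: "nat \<Rightarrow> nat \<Rightarrow> real mat" where
  "delta k j = mat k 1 (\<lambda>(r, c). if r = j - 1 then 1 else 0)"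

definition kron_list :: "real mat list \<Rightarrow> real mat" where
  "kron_list As = foldr kron As (1\<^sub>m 1)"

text \<open>The strictly increasing (n-1)-tuples z^1,...,z^l with entries in {1..kappa},
  in lexicographic order (tuples as lists, entries 1-based).\<close>
definition z_tuples :: "nat \<Rightarrow> nat \<Rightarrow> nat list list" where
  "z_tuples kappa m = sorted_list_of_set
     {zs. length zs = m \<and> sorted_wrt (<) zs \<and> set zs \<subseteq> {1..kappa}}"

text \<open>(eta^i_j)^T = delta_kappa^j \<otimes> \<Sum>_{\<sigma> \<in> S_{n-1}} sgn \<sigma> delta^{z_\<sigma>(1)} \<otimes> ... \<otimes> delta^{z_\<sigma>(n-1)},
  for the tuple zs = z^i; permutations of the positions {0..<n-1} (0-based).\<close>
definition eta_col :: "nat \<Rightarrow> nat \<Rightarrow> nat list \<Rightarrow> nat \<Rightarrow> real mat" where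
  "eta_col kappa n zs j = kron (delta kappa j)
     (mat (kappa ^ (n - 1)) 1 (\<lambda>(r, c).
        \<Sum>\<sigma> \<in> {\<sigma>. \<sigma> permutes {..<n - 1}}.
          of_int (sign \<sigma>) * kron_list (map (\<lambda>k. delta kappa (zs ! \<sigma> k)) [0..<n - 1]) $$ (r, c)))"

text \<open>B: rows eta^1_1,...,eta^1_kappa,...,eta^l_1,...,eta^l_kappa (0-based row r = (i-1)*kappa + (j-1)).\<close>
definition B_mat :: "nat \<Rightarrow> nat \<Rightarrow> real mat" where
  "B_mat kappa n = (let zs = z_tuples kappa (n - 1) in
     mat (kappa * length zs) (kappa ^ n)
       (\<lambda>(r, c). eta_col kappa n (zs ! (r div kappa)) (r mod kappa + 1) $$ (c, 0)))"

definition hcat :: "real mat \<Rightarrow> real mat \<Rightarrow> real mat" where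
  "hcat A B = mat (dim_row A) (dim_col A + dim_col B)
     (\<lambda>(i, j). if j < dim_col A then A $$ (i, j) else B $$ (i, j - dim_col A))"

definition hcat_list :: "nat \<Rightarrow> real mat list \<Rightarrow> real mat" where
  "hcat_list r As = foldr hcat As (0\<^sub>m r 0)"

definition D_mat :: "nat \<Rightarrow> nat \<Rightarrow> real mat" where
  "D_mat kappa n = (let B = B_mat kappa n in
     hcat_list (dim_row B)
       (B # map (\<lambda>k. - stp (stp B (swap_mat (kappa ^ (k - 1)) kappa)) (swap_mat kappa (kappa ^ k)))
               [1..<n]))"

end

theory Submission
  imports Defs
begin

text \<open>Inner products of Kronecker products of columns factor, and the vectors delta are
  orthonormal. A row of B is delta j tensored with the alternating tensor of an increasing tuple,
  a signed sum of pure tensors; for increasing tuples these pure tensors are orthonormal and coincide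
  only for equal tuples and equal permutations, so the rows of B are orthogonal of squared norm
  (n - 1)!. Every other block of D is -B times permutation matrices, because a semi-tensor product
  with a swap matrix whose size divides the column count is multiplication by that swap matrix
  tensored with an identity. All n blocks thus share the Gram matrix of B, which makes the Gram
  matrix of D equal to n (n - 1)! = n! times the identity.\<close>

lemma dim_kron [simp]:
  "dim_row (kron A B) = dim_row A * dim_row B" "dim_col (kron A B) = dim_col A * dim_col B"
  by (simp_all add: kron_def)

lemma index_kron:
  "i < dim_row A * dim_row B \<Longrightarrow> j < dim_col A * dim_col B \<Longrightarrow>
    kron A B $$ (i, j) = A $$ (i div dim_row B, j div dim_col B) * B $$ (i mod dim_row B, j mod dim_col B)"
  by (simp add: kron_def)

lemma kron_one_right: "kron A (1\<^sub>m 1) = A"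
  by (rule eq_matI) (auto simp: kron_def)

lemma sum_lessThan_mult_div_mod:
  fixes c :: nat
  shows "(\<Sum>i<a * c. f (i div c) (i mod c)) = (\<Sum>p<a. \<Sum>q<c. f p q)"
proof (induction a)
  case (Suc a)
  have split: "{..<Suc a * c} = {..<a * c} \<union> {a * c..<a * c + c}" by auto
  have "(\<Sum>i\<in>{a * c..<a * c + c}. f (i div c) (i mod c)) = (\<Sum>q<c. f ((a * c + q) div c) ((a * c + q) mod c))"
    by (rule sum.reindex_bij_witness[of _ "\<lambda>q. a * c + q" "\<lambda>i. i - a * c"]) auto
  also have "\<dots> = (\<Sum>q<c. f a q)"
    by (rule sum.cong) (auto simp: add.commute[of "a * c"])
  moreover have "(\<Sum>i<Suc a * c. f (i div c) (i mod c)) =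
      (\<Sum>i<a * c. f (i div c) (i mod c)) + (\<Sum>i\<in>{a * c..<a * c + c}. f (i div c) (i mod c))"
    unfolding split by (rule sum.union_disjoint) auto
  ultimately show ?case using Suc by simp
qed simp

definition col_inner :: "real mat \<Rightarrow> real mat \<Rightarrow> real" where
  "col_inner A B = (\<Sum>r<dim_row A. A $$ (r, 0) * B $$ (r, 0))"

lemma col_inner_kron:
  assumes "dim_col A = 1" "dim_col B = 1" "dim_col C = 1" "dim_col D = 1"
    and "dim_row B = dim_row A" "dim_row D = dim_row C"
  shows "col_inner (kron A C) (kron B D) = col_inner A B * col_inner C D"
proof -
  have "col_inner (kron A C) (kron B D) = (\<Sum>i<dim_row A * dim_row C.
      (A $$ (i div dim_row C, 0) * B $$ (i div dim_row C, 0)) * (C $$ (i mod dim_row C, 0) * D $$ (i mod dim_row C, 0)))"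
    unfolding col_inner_def using assms by (intro sum.cong) (auto simp: index_kron)
  also have "\<dots> = (\<Sum>p<dim_row A. \<Sum>q<dim_row C. (A $$ (p, 0) * B $$ (p, 0)) * (C $$ (q, 0) * D $$ (q, 0)))"
    by (rule sum_lessThan_mult_div_mod)
  also have "\<dots> = col_inner A B * col_inner C D"
    unfolding col_inner_def by (simp add: sum_product)
  finally show ?thesis .
qed

lemma col_inner_mat_sum:
  assumes "\<And>i. i \<in> I \<Longrightarrow> dim_row (K i) = N"
  shows "col_inner (mat N 1 (\<lambda>(r, c). \<Sum>i\<in>I. a i * K i $$ (r, c))) (mat N 1 (\<lambda>(r, c). \<Sum>j\<in>J. b j * L j $$ (r, c)))
    = (\<Sum>i\<in>I. \<Sum>j\<in>J. a i * b j * col_inner (K i) (L j))"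
proof -
  have "col_inner (mat N 1 (\<lambda>(r, c). \<Sum>i\<in>I. a i * K i $$ (r, c))) (mat N 1 (\<lambda>(r, c). \<Sum>j\<in>J. b j * L j $$ (r, c)))
      = (\<Sum>r<N. \<Sum>i\<in>I. \<Sum>j\<in>J. a i * b j * (K i $$ (r, 0) * L j $$ (r, 0)))"
    unfolding col_inner_def by (intro sum.cong) (auto simp: sum_product algebra_simps)
  also have "\<dots> = (\<Sum>i\<in>I. \<Sum>j\<in>J. a i * b j * col_inner (K i) (L j))"
    using assms by (simp add: col_inner_def sum_distrib_left sum.swap[of _ "{..<N}"])
  finally show ?thesis .
qed

lemma dim_delta [simp]: "dim_row (delta k j) = k" "dim_col (delta k j) = 1"
  by (simp_all add: delta_def)

lemma col_inner_delta:
  assumes "a \<in> {1..k}" "b \<in> {1..k}"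
  shows "col_inner (delta k a) (delta k b) = (if a = b then 1 else 0)"
proof -
  have "col_inner (delta k a) (delta k b) = (\<Sum>r<k. if r = a - 1 then (if a = b then 1 else 0) else 0)"
    unfolding col_inner_def using assms by (intro sum.cong) (auto simp: delta_def)
  also have "\<dots> = (if a = b then 1 else 0)" using assms by (subst sum.delta) auto
  finally show ?thesis .
qed

lemma kron_list_Cons: "kron_list (A # As) = kron A (kron_list As)"
  by (simp add: kron_list_def)

lemma dim_kron_list_delta [simp]:
  "dim_row (kron_list (map (delta k) as)) = k ^ length as" "dim_col (kron_list (map (delta k) as)) = 1"
  by (induction as) (simp_all add: kron_list_def)

lemma col_inner_kron_list_delta:
  "length as = length bs \<Longrightarrow> set as \<subseteq> {1..k} \<Longrightarrow> set bs \<subseteq> {1..k} \<Longrightarrow>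
    col_inner (kron_list (map (delta k) as)) (kron_list (map (delta k) bs)) = (if as = bs then 1 else 0)"
proof (induction as arbitrary: bs)
  case Nil
  then show ?case by (simp add: kron_list_def col_inner_def)
next
  case (Cons a as)
  then obtain b bs' where "bs = b # bs'" by (cases bs) auto
  with Cons show ?case
    by (simp add: kron_list_Cons col_inner_kron col_inner_delta)
qed

definition alt_tensor :: "nat \<Rightarrow> nat \<Rightarrow> nat list \<Rightarrow> real mat" where
  "alt_tensor kappa m zs = mat (kappa ^ m) 1 (\<lambda>(r, c).
     \<Sum>\<sigma> \<in> {\<sigma>. \<sigma> permutes {..<m}}.
       of_int (sign \<sigma>) * kron_list (map (\<lambda>k. delta kappa (zs ! \<sigma> k)) [0..<m]) $$ (r, c))"

lemma eta_col_eq_kron_alt_tensor: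
  "eta_col kappa n zs j = kron (delta kappa j) (alt_tensor kappa (n - 1) zs)"
  by (simp add: eta_col_def alt_tensor_def)

lemma dim_alt_tensor [simp]:
  "dim_row (alt_tensor kappa m zs) = kappa ^ m" "dim_col (alt_tensor kappa m zs) = 1"
  by (simp_all add: alt_tensor_def)

lemma set_map_nth_permutes:
  assumes "length zs = m" "\<sigma> permutes {..<m}"
  shows "set (map (\<lambda>k. zs ! \<sigma> k) [0..<m]) = set zs"
proof -
  have "set (map (\<lambda>k. zs ! \<sigma> k) [0..<m]) = (\<lambda>i. zs ! i) ` \<sigma> ` {..<m}"
    by (auto simp: image_image)
  also have "\<sigma> ` {..<m} = {..<m}" using assms(2) by (rule permutes_image)
  also have "(\<lambda>i. zs ! i) ` {..<m} = set zs" using assms(1) by (auto simp: set_conv_nth)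
  finally show ?thesis .
qed

lemma map_nth_permutes_eq_iff:
  fixes zs ws :: "'a :: linorder list"
  assumes zs: "length zs = m" "sorted_wrt (<) zs" and ws: "length ws = m" "sorted_wrt (<) ws"
    and \<sigma>: "\<sigma> permutes {..<m}" and \<tau>: "\<tau> permutes {..<m}"
  shows "map (\<lambda>k. zs ! \<sigma> k) [0..<m] = map (\<lambda>k. ws ! \<tau> k) [0..<m] \<longleftrightarrow> zs = ws \<and> \<sigma> = \<tau>"
proof
  assume eq: "map (\<lambda>k. zs ! \<sigma> k) [0..<m] = map (\<lambda>k. ws ! \<tau> k) [0..<m]"
  then have "set zs = set ws"
    using set_map_nth_permutes[OF zs(1) \<sigma>] set_map_nth_permutes[OF ws(1) \<tau>] by simp
  then have zw: "zs = ws" using strict_sorted_equal[OF ws(2) zs(2)] by simp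
  have "\<sigma> k = \<tau> k" for k
  proof (cases "k < m")
    case True
    then have "zs ! \<sigma> k = zs ! \<tau> k" using arg_cong[OF eq, of "\<lambda>xs. xs ! k"] zw by simp
    moreover have "\<sigma> k < m" "\<tau> k < m"
      using True permutes_in_image[OF \<sigma>, of k] permutes_in_image[OF \<tau>, of k] by auto
    moreover have "distinct zs" using zs(2) by (simp add: strict_sorted_iff)
    ultimately show ?thesis using zs(1) by (simp add: nth_eq_iff_index_eq)
  next
    case False
    then show ?thesis using \<sigma> \<tau> by (simp add: permutes_def)
  qed
  then show "zs = ws \<and> \<sigma> = \<tau>" using zw by auto
qed simp

text \<open>Permuted pure tensors of increasing tuples are orthonormal and coincide only for the same
  tuple and the same permutation, so only the diagonal terms of the double sum survive.\<close>
lemma col_inner_alt_tensor: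
  fixes zs ws :: "nat list"
  assumes zs: "length zs = m" "sorted_wrt (<) zs" "set zs \<subseteq> {1..kappa}"
    and ws: "length ws = m" "sorted_wrt (<) ws" "set ws \<subseteq> {1..kappa}"
  shows "col_inner (alt_tensor kappa m zs) (alt_tensor kappa m ws) = (if zs = ws then fact m else 0)"
proof -
  define P where "P = {\<sigma>. \<sigma> permutes {..<m}}"
  define K where "K xs \<sigma> = kron_list (map (delta kappa) (map (\<lambda>k. xs ! \<sigma> k) [0..<m]))" for xs \<sigma>
  have alt: "alt_tensor kappa m xs = mat (kappa ^ m) 1 (\<lambda>(r, c). \<Sum>\<sigma>\<in>P. of_int (sign \<sigma>) * K xs \<sigma> $$ (r, c))" for xs
    by (simp add: alt_tensor_def K_def P_def map_map o_def)
  have K: "col_inner (K zs \<sigma>) (K ws \<tau>) = (if zs = ws \<and> \<sigma> = \<tau> then 1 else 0)" if "\<sigma> \<in> P" "\<tau> \<in> P" for \<sigma> \<tau>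
  proof -
    have "col_inner (K zs \<sigma>) (K ws \<tau>) =
        (if map (\<lambda>k. zs ! \<sigma> k) [0..<m] = map (\<lambda>k. ws ! \<tau> k) [0..<m] then 1 else 0)"
      unfolding K_def using that zs ws set_map_nth_permutes[OF zs(1), of \<sigma>] set_map_nth_permutes[OF ws(1), of \<tau>]
      by (intro col_inner_kron_list_delta) (simp_all add: P_def)
    then show ?thesis using that map_nth_permutes_eq_iff[OF zs(1,2) ws(1,2)] by (simp add: P_def)
  qed
  have "col_inner (alt_tensor kappa m zs) (alt_tensor kappa m ws) =
      (\<Sum>\<sigma>\<in>P. \<Sum>\<tau>\<in>P. of_int (sign \<sigma>) * of_int (sign \<tau>) * col_inner (K zs \<sigma>) (K ws \<tau>))"
    unfolding alt by (rule col_inner_mat_sum) (simp add: K_def del: map_map)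
  also have "\<dots> = (\<Sum>\<sigma>\<in>P. \<Sum>\<tau>\<in>P. if zs = ws \<and> \<sigma> = \<tau> then 1 else 0)"
    by (intro sum.cong refl) (auto simp: K simp flip: of_int_mult)
  also have "\<dots> = (if zs = ws then real (card P) else 0)"
    by (simp add: P_def finite_permutations)
  also have "real (card P) = fact m"
    using card_permutations[of "{..<m}" m] by (simp add: P_def)
  finally show ?thesis by simp
qed

definition increasing_tuples :: "nat \<Rightarrow> nat \<Rightarrow> nat list set" where
  "increasing_tuples kappa m = {zs. length zs = m \<and> sorted_wrt (<) zs \<and> set zs \<subseteq> {1..kappa}}"

lemma finite_increasing_tuples: "finite (increasing_tuples kappa m)"
  by (rule finite_subset[OF _ finite_lists_length_eq[of "{1..kappa}" m]]) (auto simp: increasing_tuples_def)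

lemma card_increasing_tuples: "card (increasing_tuples kappa m) = kappa choose m"
proof -
  have "bij_betw set (increasing_tuples kappa m) {A. A \<subseteq> {1..kappa} \<and> card A = m}"
  proof (rule bij_betw_byWitness[where f' = sorted_list_of_set])
    show "\<forall>zs\<in>increasing_tuples kappa m. sorted_list_of_set (set zs) = zs"
      by (auto simp: increasing_tuples_def intro: strict_sorted_equal)
    show "\<forall>A\<in>{A. A \<subseteq> {1..kappa} \<and> card A = m}. set (sorted_list_of_set A) = A"
      by (auto simp: finite_subset[OF _ finite_atLeastAtMost])
    show "set ` increasing_tuples kappa m \<subseteq> {A. A \<subseteq> {1..kappa} \<and> card A = m}"
      by (auto simp: increasing_tuples_def strict_sorted_iff distinct_card)
    show "sorted_list_of_set ` {A. A \<subseteq> {1..kappa} \<and> card A = m} \<subseteq> increasing_tuples kappa m"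
      by (force simp: increasing_tuples_def finite_subset[OF _ finite_atLeastAtMost])
  qed
  then have "card (increasing_tuples kappa m) = card {A. A \<subseteq> {1..kappa} \<and> card A = m}"
    by (rule bij_betw_same_card)
  also have "\<dots> = kappa choose m" by (simp add: n_subsets)
  finally show ?thesis .
qed

lemma set_z_tuples: "set (z_tuples kappa m) = increasing_tuples kappa m"
  and distinct_z_tuples: "distinct (z_tuples kappa m)"
  unfolding z_tuples_def increasing_tuples_def[symmetric] using finite_increasing_tuples by simp_all

lemma length_z_tuples: "length (z_tuples kappa m) = kappa choose m"
  using set_z_tuples distinct_z_tuples card_increasing_tuples distinct_card by metis

lemma dim_B_mat [simp]:
  "dim_row (B_mat kappa n) = kappa * (kappa choose (n - 1))" "dim_col (B_mat kappa n) = kappa ^ n"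
  by (simp_all add: B_mat_def Let_def length_z_tuples)

lemma row_inner_B_mat_eq_col_inner_eta_col:
  assumes "1 \<le> n" and "r < kappa * (kappa choose (n - 1))" "r' < kappa * (kappa choose (n - 1))"
  defines "\<eta> \<equiv> \<lambda>r. eta_col kappa n (z_tuples kappa (n - 1) ! (r div kappa)) (r mod kappa + 1)"
  shows "row (B_mat kappa n) r \<bullet> row (B_mat kappa n) r' = col_inner (\<eta> r) (\<eta> r')"
proof -
  have "dim_row (\<eta> x) = kappa ^ n" for x
    using assms(1) by (simp add: \<eta>_def eta_col_eq_kron_alt_tensor power_eq_if)
  then show ?thesis
    unfolding scalar_prod_def col_inner_def using assms(2,3)
    by (intro sum.cong) (auto simp: B_mat_def \<eta>_def length_z_tuples)
qed

lemma row_inner_B_mat: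
  assumes "1 \<le> n" and r: "r < kappa * (kappa choose (n - 1))" and r': "r' < kappa * (kappa choose (n - 1))"
  shows "row (B_mat kappa n) r \<bullet> row (B_mat kappa n) r' = (if r = r' then fact (n - 1) else 0)"
proof -
  define Z where "Z = z_tuples kappa (n - 1)"
  have kappa: "kappa > 0" using r by (cases kappa) auto
  have idx: "r div kappa < length Z" "r' div kappa < length Z"
    using r r' by (simp_all add: Z_def length_z_tuples less_mult_imp_div_less mult.commute)
  have Z_in: "Z ! (r div kappa) \<in> increasing_tuples kappa (n - 1)" "Z ! (r' div kappa) \<in> increasing_tuples kappa (n - 1)"
    using idx nth_mem set_z_tuples unfolding Z_def by metis+
  have Z_eq: "Z ! (r div kappa) = Z ! (r' div kappa) \<longleftrightarrow> r div kappa = r' div kappa"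
    using idx distinct_z_tuples nth_eq_iff_index_eq unfolding Z_def by metis
  have "row (B_mat kappa n) r \<bullet> row (B_mat kappa n) r' =
      col_inner (delta kappa (r mod kappa + 1)) (delta kappa (r' mod kappa + 1)) *
      col_inner (alt_tensor kappa (n - 1) (Z ! (r div kappa))) (alt_tensor kappa (n - 1) (Z ! (r' div kappa)))"
    unfolding row_inner_B_mat_eq_col_inner_eta_col[OF assms] eta_col_eq_kron_alt_tensor Z_def
    by (rule col_inner_kron) auto
  also have "\<dots> = (if r mod kappa = r' mod kappa then 1 else 0) * (if r div kappa = r' div kappa then fact (n - 1) else 0)"
    using kappa Z_in Z_eq
    by (simp add: col_inner_delta col_inner_alt_tensor increasing_tuples_def Suc_le_eq)
  also have "\<dots> = (if r = r' then fact (n - 1) else 0)"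
    using div_mult_mod_eq[of r kappa] div_mult_mod_eq[of r' kappa] by (auto; metis)
  finally show ?thesis .
qed

definition perm_mat :: "nat \<Rightarrow> (nat \<Rightarrow> nat) \<Rightarrow> real mat" where
  "perm_mat N g = mat N N (\<lambda>(i, j). if i = g j then 1 else 0)"

lemma dim_perm_mat [simp]: "dim_row (perm_mat N g) = N" "dim_col (perm_mat N g) = N"
  by (simp_all add: perm_mat_def)

lemma perm_mat_carrier [simp]: "perm_mat N g \<in> carrier_mat N N"
  unfolding carrier_mat_def by simp

lemma perm_mat_mult_transpose:
  assumes g: "bij_betw g {..<N} {..<N}"
  shows "perm_mat N g * (perm_mat N g)\<^sup>T = 1\<^sub>m N"
proof (rule eq_matI)
  fix i i' assume "i < dim_row (1\<^sub>m N)" "i' < dim_col (1\<^sub>m N)"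
  then have i: "i < N" "i' < N" by auto
  have "(perm_mat N g * (perm_mat N g)\<^sup>T) $$ (i, i') =
      (\<Sum>j<N. (if i = g j then 1 else 0) * (if i' = g j then 1 else 0))"
    using i by (simp add: perm_mat_def scalar_prod_def lessThan_atLeast0)
  also have "\<dots> = (\<Sum>x<N. (if i = x then 1 else 0) * (if i' = x then 1 else 0))"
    using sum.reindex_bij_betw[OF g, of "\<lambda>x. (if i = x then 1 else 0) * (if i' = x then (1::real) else 0)"]
    by simp
  also have "\<dots> = 1\<^sub>m N $$ (i, i')"
    using i by (simp add: if_distrib[of "\<lambda>x. x * _"] cong: if_cong)
  finally show "(perm_mat N g * (perm_mat N g)\<^sup>T) $$ (i, i') = 1\<^sub>m N $$ (i, i')" .
qed auto

lemma row_inner_mult_perm_mat: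
  assumes A: "A \<in> carrier_mat r c" and g: "bij_betw g {..<c} {..<c}" and ij: "i < r" "j < r"
  shows "row (A * perm_mat c g) i \<bullet> row (A * perm_mat c g) j = row A i \<bullet> row A j"
proof -
  let ?P = "perm_mat c g"
  have P: "?P \<in> carrier_mat c c" by simp
  have gram: "row M i \<bullet> row M j = (M * M\<^sup>T) $$ (i, j)" if "M \<in> carrier_mat r c'" for M :: "real mat" and c'
    using that ij by (simp add: col_transpose)
  have "(A * ?P) * (A * ?P)\<^sup>T = A * ?P * (?P\<^sup>T * A\<^sup>T)"
    by (simp add: transpose_mult[OF A P])
  also have "\<dots> = A * (?P * (?P\<^sup>T * A\<^sup>T))"
    using A P by (intro assoc_mult_mat) auto
  also have "?P * (?P\<^sup>T * A\<^sup>T) = (?P * ?P\<^sup>T) * A\<^sup>T"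
    using A P by (intro assoc_mult_mat[symmetric]) auto
  also have "\<dots> = A\<^sup>T"
    using A by (simp add: perm_mat_mult_transpose[OF g])
  finally show ?thesis
    using gram[OF A] gram[of "A * ?P" c] A P by simp
qed

lemma bij_betw_lessThan_if_inj:
  fixes g :: "nat \<Rightarrow> nat"
  assumes "inj_on g {..<N}" "\<And>j. j < N \<Longrightarrow> g j < N"
  shows "bij_betw g {..<N} {..<N}"
proof -
  have "g ` {..<N} = {..<N}" by (rule endo_inj_surj) (use assms in auto)
  then show ?thesis using assms(1) by (simp add: bij_betw_def)
qed

lemma dim_swap_mat [simp]: "dim_row (swap_mat a b) = a * b" "dim_col (swap_mat a b) = a * b"
  by (simp_all add: swap_mat_def)

lemma swap_mat_eq_perm_mat: "swap_mat a b = perm_mat (a * b) (\<lambda>c. c mod b * a + c div b)"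
  by (simp add: swap_mat_def perm_mat_def)

lemma bij_betw_swap_index:
  fixes a b :: nat
  shows "bij_betw (\<lambda>c. c mod b * a + c div b) {..<a * b} {..<a * b}"
proof (rule bij_betw_lessThan_if_inj)
  have dm: "(c mod b * a + c div b) div a = c mod b" "(c mod b * a + c div b) mod a = c div b"
    if "c < a * b" for c
  proof -
    have "c div b < a" using less_mult_imp_div_less[OF that] .
    then show "(c mod b * a + c div b) div a = c mod b" "(c mod b * a + c div b) mod a = c div b"
      by simp_all
  qed
  show "inj_on (\<lambda>c. c mod b * a + c div b) {..<a * b}"
    by (rule inj_onI) (metis dm div_mult_mod_eq lessThan_iff)
  show "c mod b * a + c div b < a * b" if "c < a * b" for c
  proof -
    have "b > 0" using that by (cases b) auto
    then have "c mod b + 1 \<le> b" by (simp add: Suc_le_eq)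
    have "c div b < a" using less_mult_imp_div_less[OF that] .
    then have "c mod b * a + c div b < (c mod b + 1) * a" by simp
    also have "\<dots> \<le> b * a" using \<open>c mod b + 1 \<le> b\<close> by (rule mult_right_mono) simp
    also have "\<dots> = a * b" by simp
    finally show ?thesis .
  qed
qed

lemma kron_perm_mat_one:
  assumes "s > 0"
  shows "kron (perm_mat N g) (1\<^sub>m s) = perm_mat (N * s) (\<lambda>j. g (j div s) * s + j mod s)"
proof (rule eq_matI)
  fix i j assume "i < dim_row (perm_mat (N * s) (\<lambda>j. g (j div s) * s + j mod s))"
    "j < dim_col (perm_mat (N * s) (\<lambda>j. g (j div s) * s + j mod s))"
  then have ij: "i < N * s" "j < N * s" by (auto simp: perm_mat_def)
  then have "i div s < N" "j div s < N" by (simp_all add: less_mult_imp_div_less)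
  with ij assms have "kron (perm_mat N g) (1\<^sub>m s) $$ (i, j) =
      (if i div s = g (j div s) \<and> i mod s = j mod s then 1 else 0)"
    by (simp add: index_kron perm_mat_def)
  also have "\<dots> = perm_mat (N * s) (\<lambda>j. g (j div s) * s + j mod s) $$ (i, j)"
    using ij assms by (simp add: perm_mat_def) (metis div_mult_mod_eq mod_mult_self3 div_mult_self3 mod_less div_less mod_less_divisor add_0_left)
  finally show "kron (perm_mat N g) (1\<^sub>m s) $$ (i, j) = perm_mat (N * s) (\<lambda>j. g (j div s) * s + j mod s) $$ (i, j)" .
qed (auto simp: perm_mat_def)

lemma bij_betw_kron_index:
  fixes g :: "nat \<Rightarrow> nat" and N s :: nat
  assumes g: "bij_betw g {..<N} {..<N}" and s: "s > 0"
  shows "bij_betw (\<lambda>j. g (j div s) * s + j mod s) {..<N * s} {..<N * s}"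
proof (rule bij_betw_lessThan_if_inj)
  have q: "j div s < N" if "j < N * s" for j
    using that by (simp add: less_mult_imp_div_less)
  have dm: "(g (j div s) * s + j mod s) div s = g (j div s)" "(g (j div s) * s + j mod s) mod s = j mod s" for j
    using s by simp_all
  show "inj_on (\<lambda>j. g (j div s) * s + j mod s) {..<N * s}"
  proof (rule inj_onI)
    fix j j' assume j: "j \<in> {..<N * s}" "j' \<in> {..<N * s}"
      and eq: "g (j div s) * s + j mod s = g (j' div s) * s + j' mod s"
    then have "g (j div s) = g (j' div s)" "j mod s = j' mod s" using dm by metis+
    moreover have "j div s \<in> {..<N}" "j' div s \<in> {..<N}" using j q by auto
    ultimately have "j div s = j' div s" using g by (auto simp: bij_betw_def dest: inj_onD)
    then show "j = j'" using \<open>j mod s = j' mod s\<close> by (metis div_mult_mod_eq)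
  qed
  show "g (j div s) * s + j mod s < N * s" if "j < N * s" for j
  proof -
    have "g (j div s) + 1 \<le> N" using q[OF that] g by (auto simp: bij_betw_def Suc_le_eq)
    have "g (j div s) * s + j mod s < (g (j div s) + 1) * s" using s by simp
    also have "\<dots> \<le> N * s" using \<open>g (j div s) + 1 \<le> N\<close> by (rule mult_right_mono) simp
    finally show ?thesis .
  qed
qed

text \<open>As a * b divides c, the lcm in the semi-tensor product is c itself.\<close>
lemma stp_swap_mat_eq_mult_perm_mat:
  assumes A: "A \<in> carrier_mat r c" and c: "c > 0" and ab: "a * b dvd c"
  shows "\<exists>g. bij_betw g {..<c} {..<c} \<and> stp A (swap_mat a b) = A * perm_mat c g"
proof -
  define s where "s = c div (a * b)"
  have cs: "a * b * s = c" using ab by (simp add: s_def)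
  then have s: "s > 0" using c by (cases s) auto
  have "lcm c (a * b) = c" using ab by (rule lcm_proj1_if_dvd_nat)
  then have "stp A (swap_mat a b) = kron A (1\<^sub>m (c div c)) * kron (swap_mat a b) (1\<^sub>m s)"
    using A unfolding stp_def Let_def s_def by simp
  also have "\<dots> = A * kron (swap_mat a b) (1\<^sub>m s)"
    using c by (simp add: kron_one_right[unfolded One_nat_def])
  also have "\<dots> = A * perm_mat c (\<lambda>j. (j div s mod b * a + j div s div b) * s + j mod s)"
    unfolding swap_mat_eq_perm_mat kron_perm_mat_one[OF s] cs ..
  finally have "stp A (swap_mat a b) = A * perm_mat c (\<lambda>j. (j div s mod b * a + j div s div b) * s + j mod s)" .
  moreover have "bij_betw (\<lambda>j. (j div s mod b * a + j div s div b) * s + j mod s) {..<c} {..<c}"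
    using bij_betw_kron_index[OF bij_betw_swap_index[where a = a and b = b] s] unfolding cs .
  ultimately show ?thesis by blast
qed

lemma
  assumes "A \<in> carrier_mat r c" and "c > 0" and "a * b dvd c"
  shows stp_swap_mat_carrier: "stp A (swap_mat a b) \<in> carrier_mat r c"
    and row_inner_stp_swap_mat: "i < r \<Longrightarrow> j < r \<Longrightarrow>
      row (stp A (swap_mat a b)) i \<bullet> row (stp A (swap_mat a b)) j = row A i \<bullet> row A j"
proof -
  obtain g where g: "bij_betw g {..<c} {..<c}" and eq: "stp A (swap_mat a b) = A * perm_mat c g"
    using stp_swap_mat_eq_mult_perm_mat[OF assms] by blast
  show "stp A (swap_mat a b) \<in> carrier_mat r c"
    unfolding eq using assms(1) by simp
  show "row (stp A (swap_mat a b)) i \<bullet> row (stp A (swap_mat a b)) j = row A i \<bullet> row A j"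
    if "i < r" "j < r"
    unfolding eq using assms(1) g that by (rule row_inner_mult_perm_mat)
qed

lemma
  assumes A: "A \<in> carrier_mat r (kappa ^ n)" and "kappa > 0" "1 \<le> k" "k < n"
  defines "M \<equiv> - stp (stp A (swap_mat (kappa ^ (k - 1)) kappa)) (swap_mat kappa (kappa ^ k))"
  shows D_block_carrier: "M \<in> carrier_mat r (kappa ^ n)"
    and row_inner_D_block: "i < r \<Longrightarrow> j < r \<Longrightarrow> row M i \<bullet> row M j = row A i \<bullet> row A j"
proof -
  define S where "S = stp A (swap_mat (kappa ^ (k - 1)) kappa)"
  have c: "kappa ^ n > 0" using assms by simp
  have d1: "kappa ^ (k - 1) * kappa dvd kappa ^ n"
    using assms by (simp add: le_imp_power_dvd flip: power_Suc2)
  have d2: "kappa * kappa ^ k dvd kappa ^ n"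
    using assms by (simp add: le_imp_power_dvd flip: power_Suc)
  have S: "S \<in> carrier_mat r (kappa ^ n)"
    unfolding S_def using A c d1 by (rule stp_swap_mat_carrier)
  have M: "M = - stp S (swap_mat kappa (kappa ^ k))" by (simp add: M_def S_def)
  show "M \<in> carrier_mat r (kappa ^ n)"
    unfolding M using stp_swap_mat_carrier[OF S c d2] by simp
  show "row M i \<bullet> row M j = row A i \<bullet> row A j" if "i < r" "j < r"
  proof -
    have "row M i \<bullet> row M j = row (stp S (swap_mat kappa (kappa ^ k))) i \<bullet> row (stp S (swap_mat kappa (kappa ^ k))) j"
      unfolding M using that stp_swap_mat_carrier[OF S c d2] by simp
    also have "\<dots> = row S i \<bullet> row S j" using S c d2 that by (rule row_inner_stp_swap_mat)
    also have "\<dots> = row A i \<bullet> row A j" unfolding S_def using A c d1 that by (rule row_inner_stp_swap_mat)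
    finally show ?thesis .
  qed
qed

lemma dim_hcat [simp]:
  "dim_row (hcat A B) = dim_row A" "dim_col (hcat A B) = dim_col A + dim_col B"
  by (simp_all add: hcat_def)

lemma row_inner_hcat:
  assumes "dim_row B = dim_row A" and ij: "i < dim_row A" "j < dim_row A"
  shows "row (hcat A B) i \<bullet> row (hcat A B) j = row A i \<bullet> row A j + row B i \<bullet> row B j"
proof -
  define ca cb where "ca = dim_col A" and "cb = dim_col B"
  have "row (hcat A B) i \<bullet> row (hcat A B) j = (\<Sum>c = 0..<ca + cb. hcat A B $$ (i, c) * hcat A B $$ (j, c))"
    unfolding scalar_prod_def using ij by (intro sum.cong) (auto simp: ca_def cb_def)
  also have "\<dots> = (\<Sum>c = 0..<ca. hcat A B $$ (i, c) * hcat A B $$ (j, c))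
      + (\<Sum>c = ca..<ca + cb. hcat A B $$ (i, c) * hcat A B $$ (j, c))"
    by (rule sum.atLeastLessThan_concat[symmetric]) auto
  also have "(\<Sum>c = ca..<ca + cb. hcat A B $$ (i, c) * hcat A B $$ (j, c))
      = (\<Sum>c = 0..<cb. hcat A B $$ (i, c + ca) * hcat A B $$ (j, c + ca))"
    using sum.shift_bounds_nat_ivl[of _ 0 ca cb] by (simp add: add.commute)
  also have "(\<Sum>c = 0..<ca. hcat A B $$ (i, c) * hcat A B $$ (j, c)) = row A i \<bullet> row A j"
    unfolding scalar_prod_def using ij by (intro sum.cong) (auto simp: hcat_def ca_def)
  also have "(\<Sum>c = 0..<cb. hcat A B $$ (i, c + ca) * hcat A B $$ (j, c + ca)) = row B i \<bullet> row B j"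
    unfolding scalar_prod_def using ij assms(1) by (intro sum.cong) (auto simp: hcat_def ca_def cb_def)
  finally show ?thesis .
qed

lemma dim_col_hcat_list: "dim_col (hcat_list r As) = (\<Sum>A\<leftarrow>As. dim_col A)"
  by (induction As) (simp_all add: hcat_list_def)

lemma
  assumes "\<forall>A \<in> set As. dim_row A = r"
  shows dim_row_hcat_list: "dim_row (hcat_list r As) = r"
    and row_inner_hcat_list: "i < r \<Longrightarrow> j < r \<Longrightarrow>
      row (hcat_list r As) i \<bullet> row (hcat_list r As) j = (\<Sum>A\<leftarrow>As. row A i \<bullet> row A j)"
  using assms
proof (induction As)
  case Nil
  { case 1 show ?case by (simp add: hcat_list_def) }
  { case 2 then show ?case by (simp add: hcat_list_def scalar_prod_def) }
next
  case (Cons A As)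
  { case 1 then show ?case by (simp add: hcat_list_def) }
  { case 2 then show ?case using Cons.IH by (simp add: hcat_list_def row_inner_hcat) }
qed

lemma
  assumes carrier: "\<forall>M \<in> set Ms. M \<in> carrier_mat r c"
    and gram: "\<forall>M \<in> set Ms. \<forall>i < r. \<forall>j < r. row M i \<bullet> row M j = g i j"
  shows dim_hcat_list_uniform: "dim_row (hcat_list r Ms) = r \<and> dim_col (hcat_list r Ms) = length Ms * c"
    and row_inner_hcat_list_uniform: "i < r \<Longrightarrow> j < r \<Longrightarrow>
      row (hcat_list r Ms) i \<bullet> row (hcat_list r Ms) j = real (length Ms) * g i j"
proof -
  have rows: "\<forall>M \<in> set Ms. dim_row M = r" using carrier by auto
  have cols: "map dim_col Ms = map (\<lambda>_. c) Ms" using carrier by auto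
  show "dim_row (hcat_list r Ms) = r \<and> dim_col (hcat_list r Ms) = length Ms * c"
    unfolding dim_col_hcat_list cols sum_list_triv using dim_row_hcat_list[OF rows] by simp
  show "row (hcat_list r Ms) i \<bullet> row (hcat_list r Ms) j = real (length Ms) * g i j" if "i < r" "j < r"
  proof -
    have blocks: "map (\<lambda>M. row M i \<bullet> row M j) Ms = map (\<lambda>_. g i j) Ms" using gram that by auto
    show ?thesis unfolding row_inner_hcat_list[OF rows that] blocks sum_list_triv by simp
  qed
qed

theorem proposition4p7:
  fixes n kappa :: nat
  assumes "2 \<le> n" and "n \<le> kappa + 1"
  shows "dim_row (D_mat kappa n) = kappa * (kappa choose (n - 1))
    \<and> dim_col (D_mat kappa n) = n * kappa ^ n
    \<and> (\<forall>i < kappa * (kappa choose (n - 1)). \<forall>j < kappa * (kappa choose (n - 1)).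
          row (D_mat kappa n) i \<bullet> row (D_mat kappa n) j = (if i = j then fact n else 0))"
proof -
  define B where "B = B_mat kappa n"
  define r where "r = kappa * (kappa choose (n - 1))"
  define blocks where "blocks = B # map (\<lambda>k. - stp (stp B (swap_mat (kappa ^ (k - 1)) kappa))
    (swap_mat kappa (kappa ^ k))) [1..<n]"
  have kappa: "kappa > 0" using assms by simp
  have B: "B \<in> carrier_mat r (kappa ^ n)" by (intro carrier_matI) (simp_all add: B_def r_def)
  have carrier: "\<forall>M \<in> set blocks. M \<in> carrier_mat r (kappa ^ n)"
    using B kappa D_block_carrier by (auto simp: blocks_def)
  have gram: "\<forall>M \<in> set blocks. \<forall>i < r. \<forall>j < r. row M i \<bullet> row M j = row B i \<bullet> row B j"
    using B kappa row_inner_D_block by (auto simp: blocks_def)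
  have D: "D_mat kappa n = hcat_list r blocks"
    by (simp add: D_mat_def Let_def B_def r_def blocks_def)
  have len: "length blocks = n" using assms by (simp add: blocks_def)
  have "real n * (row B i \<bullet> row B j) = (if i = j then fact n else 0)" if "i < r" "j < r" for i j
    using assms that row_inner_B_mat[of n i kappa j] by (simp add: B_def r_def fact_reduce[of n])
  then show ?thesis
    using dim_hcat_list_uniform[OF carrier gram] row_inner_hcat_list_uniform[OF carrier gram]
    by (simp add: D len r_def)
qed

end
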